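(* Let $\mathcal S$ be a subset of a finite multi-algebra $\mathcal A=\mathcal A_1\times\cdots\times\mathcal A_m$ that is $\Rsh$-invariant through a multi-refinement $H=(h_1,\dots,h_m)$. Then $\mathcal S$ is projection stable through $H$.
   Context: A finite non-associative algebra is a tuple $(\mathcal A,\cup,\neg,\emptyset,\mathcal B,\diamond,\overline{\cdot},e)$ where $(\mathcal A,\cup,\neg,\emptyset,\mathcal B)$ is a finite Boolean algebra and for all $x,y,z$: $\overline{\overline x}=x$, $\overline{x\cup y}=\overline x\cup\overline y$, $\overline{x\diamond y}=\overline y\diamond\overline x$, $e\diamond x=x\diamond e=x$, $x\diamond(y\cup z)=(x\diamond y)\cup(x\diamond z)$, $(x\diamond y)\cap\overline z=\emptyset\iff(y\diamond z)\cap\overline x=\emptyset$. $r\subseteq r'$ means $r\cup r'=r'$. A projection operator from $\mathcal A$ to $\mathcal A'$ is a map $\Rsh$ with $\Rsh(r\cup r')=\Rsh r\cup\Rsh r'$ and $\Rsh\overline r=\overline{\Rsh r}$. A finite multi-algebra is a product $\mathcal A_1\times\cdots\times\mathcal A_m$ of finite non-associative algebras with projection operators $\Rsh_i^j:\mathcal A_i\to\mathcal A_j$ for distinct $i,j$. A relation $R=(R_1,\dots,R_m)$ is $\Rsh$-consistent if $R_j\subseteq\Rsh_i^jR_i$ for all distinct $i,j$ and $R_i\ne\emptyset$ for all $i$. Slices $\mathcal S_i=\{R_i:R\in\mathcal S\}$. A refinement of $\mathcal S$ is a function $H$ with $H(R)\subseteq R$ and $H(R)$ without empty component whenever $R$ has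 none; a multi-refinement has the form $H(R)=(h_1(R_1),\dots,h_m(R_m))$ with each $h_i$ a refinement of $\mathcal S_i$ (i.e. $h_i(r)\subseteq r$ and $h_i(r)\ne\emptyset$ if $r\neq\emptyset$). $\mathcal S$ is $\Rsh$-invariant through $H$ if $\Rsh_i^jr=\Rsh_i^jh_i(r)$ for all distinct $i,j$ and all $r\in\mathcal S_i$. $\mathcal S$ is projection stable through $H$ if $H(R)$ is $\Rsh$-consistent for every $\Rsh$-consistent $R\in\mathcal S$. *)

theory Defs
  imports Main
begin

definition ba_sub :: "('a \<Rightarrow> 'a \<Rightarrow> 'a) \<Rightarrow> 'a \<Rightarrow> 'a \<Rightarrow> bool" where
  "ba_sub cup r r' \<longleftrightarrow> cup r r' = r'"

definition ba_meet :: "('a \<Rightarrow> 'a \<Rightarrow> 'a) \<Rightarrow> ('a \<Rightarrow> 'a) \<Rightarrow> 'a \<Rightarrow> 'a \<Rightarrow> 'a" where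
  "ba_meet cup neg x y = neg (cup (neg x) (neg y))"

definition finite_boolean_algebra ::
  "'a set \<Rightarrow> ('a \<Rightarrow> 'a \<Rightarrow> 'a) \<Rightarrow> ('a \<Rightarrow> 'a) \<Rightarrow> 'a \<Rightarrow> 'a \<Rightarrow> bool" where
  "finite_boolean_algebra A cup neg emp tp \<longleftrightarrow>
     finite A \<and> emp \<in> A \<and> tp \<in> A \<and>
     (\<forall>x\<in>A. \<forall>y\<in>A. cup x y \<in> A) \<and> (\<forall>x\<in>A. neg x \<in> A) \<and>
     (\<forall>x\<in>A. \<forall>y\<in>A. cup x y = cup y x) \<and>
     (\<forall>x\<in>A. \<forall>y\<in>A. ba_meet cup neg x y = ba_meet cup neg y x) \<and>
     (\<forall>x\<in>A. \<forall>y\<in>A. \<forall>z\<in>A. cup x (cup y z) = cup (cup x y) z) \<and>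
     (\<forall>x\<in>A. \<forall>y\<in>A. \<forall>z\<in>A. ba_meet cup neg x (ba_meet cup neg y z) = ba_meet cup neg (ba_meet cup neg x y) z) \<and>
     (\<forall>x\<in>A. \<forall>y\<in>A. cup x (ba_meet cup neg x y) = x) \<and>
     (\<forall>x\<in>A. \<forall>y\<in>A. ba_meet cup neg x (cup x y) = x) \<and>
     (\<forall>x\<in>A. \<forall>y\<in>A. \<forall>z\<in>A. cup x (ba_meet cup neg y z) = ba_meet cup neg (cup x y) (cup x z)) \<and>
     (\<forall>x\<in>A. cup x emp = x) \<and> (\<forall>x\<in>A. ba_meet cup neg x tp = x) \<and>
     (\<forall>x\<in>A. cup x (neg x) = tp) \<and> (\<forall>x\<in>A. ba_meet cup neg x (neg x) = emp)"

definition finite_nonassoc_algebra ::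
  "'a set \<Rightarrow> ('a \<Rightarrow> 'a \<Rightarrow> 'a) \<Rightarrow> ('a \<Rightarrow> 'a) \<Rightarrow> 'a \<Rightarrow> 'a \<Rightarrow>
   ('a \<Rightarrow> 'a \<Rightarrow> 'a) \<Rightarrow> ('a \<Rightarrow> 'a) \<Rightarrow> 'a \<Rightarrow> bool" where
  "finite_nonassoc_algebra A cup neg emp tp dia conv e \<longleftrightarrow>
     finite_boolean_algebra A cup neg emp tp \<and>
     e \<in> A \<and> (\<forall>x\<in>A. \<forall>y\<in>A. dia x y \<in> A) \<and> (\<forall>x\<in>A. conv x \<in> A) \<and>
     (\<forall>x\<in>A. conv (conv x) = x) \<and>
     (\<forall>x\<in>A. \<forall>y\<in>A. conv (cup x y) = cup (conv x) (conv y)) \<and>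
     (\<forall>x\<in>A. \<forall>y\<in>A. conv (dia x y) = dia (conv y) (conv x)) \<and>
     (\<forall>x\<in>A. dia e x = x \<and> dia x e = x) \<and>
     (\<forall>x\<in>A. \<forall>y\<in>A. \<forall>z\<in>A. dia x (cup y z) = cup (dia x y) (dia x z)) \<and>
     (\<forall>x\<in>A. \<forall>y\<in>A. \<forall>z\<in>A.
        (ba_meet cup neg (dia x y) (conv z) = emp \<longleftrightarrow> ba_meet cup neg (dia y z) (conv x) = emp))"

text \<open>The components are indexed by 0,...,m-1 and all carriers live in one ambient type.\<close>

record 'a multi_algebra =
  ma_dim :: nat
  ma_carrier :: "nat \<Rightarrow> 'a set"
  ma_cup :: "nat \<Rightarrow> 'a \<Rightarrow> 'a \<Rightarrow> 'a"
  ma_neg :: "nat \<Rightarrow> 'a \<Rightarrow> 'a"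
  ma_emp :: "nat \<Rightarrow> 'a"
  ma_top :: "nat \<Rightarrow> 'a"
  ma_comp :: "nat \<Rightarrow> 'a \<Rightarrow> 'a \<Rightarrow> 'a"
  ma_conv :: "nat \<Rightarrow> 'a \<Rightarrow> 'a"
  ma_id :: "nat \<Rightarrow> 'a"
  ma_proj :: "nat \<Rightarrow> nat \<Rightarrow> 'a \<Rightarrow> 'a"

definition ma_sub :: "'a multi_algebra \<Rightarrow> nat \<Rightarrow> 'a \<Rightarrow> 'a \<Rightarrow> bool" where
  "ma_sub M i r r' \<longleftrightarrow> ba_sub (ma_cup M i) r r'"

definition projection_operator ::
  "'a multi_algebra \<Rightarrow> nat \<Rightarrow> nat \<Rightarrow> ('a \<Rightarrow> 'a) \<Rightarrow> bool" where
  "projection_operator M i j P \<longleftrightarrow>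
     (\<forall>r\<in>ma_carrier M i. P r \<in> ma_carrier M j) \<and>
     (\<forall>r\<in>ma_carrier M i. \<forall>r'\<in>ma_carrier M i.
        P (ma_cup M i r r') = ma_cup M j (P r) (P r')) \<and>
     (\<forall>r\<in>ma_carrier M i. P (ma_conv M i r) = ma_conv M j (P r))"

definition finite_multi_algebra :: "'a multi_algebra \<Rightarrow> bool" where
  "finite_multi_algebra M \<longleftrightarrow>
     (\<forall>i<ma_dim M. finite_nonassoc_algebra (ma_carrier M i) (ma_cup M i) (ma_neg M i)
         (ma_emp M i) (ma_top M i) (ma_comp M i) (ma_conv M i) (ma_id M i)) \<and>
     (\<forall>i<ma_dim M. \<forall>j<ma_dim M. i \<noteq> j \<longrightarrow> projection_operator M i j (ma_proj M i j))"

text \<open>Relations of the multi-algebra are functions \<open>nat \<Rightarrow> 'a\<close>; only the components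
  below \<open>ma_dim M\<close> are meaningful.\<close>

definition ma_rel :: "'a multi_algebra \<Rightarrow> (nat \<Rightarrow> 'a) \<Rightarrow> bool" where
  "ma_rel M R \<longleftrightarrow> (\<forall>i<ma_dim M. R i \<in> ma_carrier M i)"

definition slice :: "(nat \<Rightarrow> 'a) set \<Rightarrow> nat \<Rightarrow> 'a set" where
  "slice S i = {R i | R. R \<in> S}"

definition proj_consistent :: "'a multi_algebra \<Rightarrow> (nat \<Rightarrow> 'a) \<Rightarrow> bool" where
  "proj_consistent M R \<longleftrightarrow>
     (\<forall>i<ma_dim M. \<forall>j<ma_dim M. i \<noteq> j \<longrightarrow> ma_sub M j (R j) (ma_proj M i j (R i))) \<and>
     (\<forall>i<ma_dim M. R i \<noteq> ma_emp M i)"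

definition no_empty_component :: "'a multi_algebra \<Rightarrow> (nat \<Rightarrow> 'a) \<Rightarrow> bool" where
  "no_empty_component M R \<longleftrightarrow> (\<forall>i<ma_dim M. R i \<noteq> ma_emp M i)"

definition refinement ::
  "'a multi_algebra \<Rightarrow> (nat \<Rightarrow> 'a) set \<Rightarrow> ((nat \<Rightarrow> 'a) \<Rightarrow> (nat \<Rightarrow> 'a)) \<Rightarrow> bool" where
  "refinement M S H \<longleftrightarrow>
     (\<forall>R\<in>S. ma_rel M (H R) \<and> (\<forall>i<ma_dim M. ma_sub M i (H R i) (R i)) \<and>
        (no_empty_component M R \<longrightarrow> no_empty_component M (H R)))"

definition refinement_slice ::
  "'a multi_algebra \<Rightarrow> nat \<Rightarrow> 'a set \<Rightarrow> ('a \<Rightarrow> 'a) \<Rightarrow> bool" where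
  "refinement_slice M i Si h \<longleftrightarrow>
     (\<forall>r\<in>Si. h r \<in> ma_carrier M i \<and> ma_sub M i (h r) r \<and>
        (r \<noteq> ma_emp M i \<longrightarrow> h r \<noteq> ma_emp M i))"

definition multi_H :: "(nat \<Rightarrow> 'a \<Rightarrow> 'a) \<Rightarrow> (nat \<Rightarrow> 'a) \<Rightarrow> (nat \<Rightarrow> 'a)" where
  "multi_H h R = (\<lambda>i. h i (R i))"

definition multi_refinement ::
  "'a multi_algebra \<Rightarrow> (nat \<Rightarrow> 'a) set \<Rightarrow> (nat \<Rightarrow> 'a \<Rightarrow> 'a) \<Rightarrow> bool" where
  "multi_refinement M S h \<longleftrightarrow> (\<forall>i<ma_dim M. refinement_slice M i (slice S i) (h i))"

definition proj_invariant ::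
  "'a multi_algebra \<Rightarrow> (nat \<Rightarrow> 'a) set \<Rightarrow> (nat \<Rightarrow> 'a \<Rightarrow> 'a) \<Rightarrow> bool" where
  "proj_invariant M S h \<longleftrightarrow>
     (\<forall>i<ma_dim M. \<forall>j<ma_dim M. i \<noteq> j \<longrightarrow>
        (\<forall>r\<in>slice S i. ma_proj M i j r = ma_proj M i j (h i r)))"

definition projection_stable ::
  "'a multi_algebra \<Rightarrow> (nat \<Rightarrow> 'a) set \<Rightarrow> ((nat \<Rightarrow> 'a) \<Rightarrow> (nat \<Rightarrow> 'a)) \<Rightarrow> bool" where
  "projection_stable M S H \<longleftrightarrow>
     (\<forall>R\<in>S. proj_consistent M R \<longrightarrow> proj_consistent M (H R))"

end

theory Submission
  imports Defs
begin

text \<open>Fix a consistent \<open>R \<in> S\<close> and distinct \<open>i, j\<close>. Then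
  \<open>h\<^sub>j(R\<^sub>j) \<subseteq> R\<^sub>j \<subseteq> \<Rsh>\<^sub>i\<^sup>j R\<^sub>i = \<Rsh>\<^sub>i\<^sup>j h\<^sub>i(R\<^sub>i)\<close>, the last step by invariance; and every
  \<open>h\<^sub>i(R\<^sub>i)\<close> is nonempty because \<open>R\<^sub>i\<close> is. So shrinking a consistent relation
  componentwise, without changing any of its projections, keeps it consistent.\<close>

lemma ba_sub_trans:
  assumes "finite_boolean_algebra A cup neg emp tp" "a \<in> A" "b \<in> A" "c \<in> A"
    and "ba_sub cup a b" "ba_sub cup b c"
  shows "ba_sub cup a c"
proof -
  have "cup a (cup b c) = cup (cup a b) c"
    using assms(1-4) unfolding finite_boolean_algebra_def by blast
  then show ?thesis
    using assms(5,6) unfolding ba_sub_def by simp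
qed

lemma finite_multi_algebra_boolean_algebra:
  assumes "finite_multi_algebra M" "i < ma_dim M"
  shows "finite_boolean_algebra (ma_carrier M i) (ma_cup M i) (ma_neg M i) (ma_emp M i) (ma_top M i)"
  using assms unfolding finite_multi_algebra_def finite_nonassoc_algebra_def by blast

lemma finite_multi_algebra_proj_in_carrier:
  assumes "finite_multi_algebra M" "i < ma_dim M" "j < ma_dim M" "i \<noteq> j"
    and "r \<in> ma_carrier M i"
  shows "ma_proj M i j r \<in> ma_carrier M j"
  using assms unfolding finite_multi_algebra_def projection_operator_def by blast

lemma proj_consistent_shrink:
  assumes M: "finite_multi_algebra M"
    and R: "ma_rel M R" "proj_consistent M R"
    and R': "ma_rel M R'"
    and sub: "\<And>i. i < ma_dim M \<Longrightarrow> ma_sub M i (R' i) (R i)"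
    and nonempty: "\<And>i. i < ma_dim M \<Longrightarrow> R' i \<noteq> ma_emp M i"
    and same_proj: "\<And>i j. \<lbrakk>i < ma_dim M; j < ma_dim M; i \<noteq> j\<rbrakk> \<Longrightarrow>
      ma_proj M i j (R' i) = ma_proj M i j (R i)"
  shows "proj_consistent M R'"
  unfolding proj_consistent_def
proof (intro conjI allI impI)
  fix i j assume i: "i < ma_dim M" and j: "j < ma_dim M" and ij: "i \<noteq> j"
  have "ma_sub M j (R j) (ma_proj M i j (R i))"
    using R(2) i j ij unfolding proj_consistent_def by blast
  moreover have "ma_proj M i j (R i) \<in> ma_carrier M j"
    using finite_multi_algebra_proj_in_carrier[OF M i j ij] R(1) i unfolding ma_rel_def by blast
  ultimately have "ma_sub M j (R' j) (ma_proj M i j (R i))"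
    using ba_sub_trans[OF finite_multi_algebra_boolean_algebra[OF M j]] sub[OF j] R(1) R' j
    unfolding ma_sub_def ma_rel_def by blast
  then show "ma_sub M j (R' j) (ma_proj M i j (R' i))"
    using same_proj[OF i j ij] by simp
qed (use nonempty in blast)

theorem proposition6p22:
  fixes M :: "'a multi_algebra"
    and S :: "(nat \<Rightarrow> 'a) set"
    and h :: "nat \<Rightarrow> 'a \<Rightarrow> 'a"
  assumes "finite_multi_algebra M"
    and "\<forall>R\<in>S. ma_rel M R"
    and "multi_refinement M S h"
    and "proj_invariant M S h"
  shows "projection_stable M S (multi_H h)"
  unfolding projection_stable_def
proof (intro ballI impI)
  fix R assume "R \<in> S" and consistent: "proj_consistent M R"
  then have slice: "R i \<in> slice S i" for i
    unfolding slice_def by blast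
  have refines: "h i (R i) \<in> ma_carrier M i \<and> ma_sub M i (h i (R i)) (R i) \<and>
      (R i \<noteq> ma_emp M i \<longrightarrow> h i (R i) \<noteq> ma_emp M i)" if "i < ma_dim M" for i
    using assms(3) that slice unfolding multi_refinement_def refinement_slice_def by blast
  show "proj_consistent M (multi_H h R)"
  proof (rule proj_consistent_shrink[OF assms(1) _ consistent])
    show "ma_rel M R" using assms(2) \<open>R \<in> S\<close> by blast
    show "ma_rel M (multi_H h R)"
      using refines unfolding ma_rel_def multi_H_def by blast
  qed (use refines consistent assms(4) slice in
       \<open>auto simp: multi_H_def proj_consistent_def proj_invariant_def\<close>)
qed

end
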